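(* Let $\mathcal{M}=\langle S,\to,L\rangle$ be a labeled transition system, let $B\subseteq S\times S$ be a skipping simulation on $\mathcal{M}$, and let $s,u,w\in S$ with $sBw$, $s\to u$, and $\langle s,u\rangle$ a node of $\mathit{ranktCt}(\mathcal{M},s,w)$. Then $\mathit{size}(\mathit{ranktCt}(\mathcal{M},u,w))\prec\mathit{size}(\mathit{ranktCt}(\mathcal{M},s,w))$.
   Context: A labeled transition system is $\mathcal{M}=\langle S,\to,L\rangle$ where $S$ is a non-empty set of states, $\to\subseteq S\times S$ is left-total, and $L$ is a function with domain $S$. A fullpath is an infinite sequence $\sigma$ with $\sigma(i)\to\sigma(i+1)$ for all $i$; it starts at $\sigma(0)$. $w\to^{+}v$ means there is a finite path $w=v_0\to\cdots\to v_k=v$ with $k\ge1$. Let $\mathit{INC}$ be the set of strictly increasing infinite sequences of naturals starting at $0$. For a fullpath $\sigma$ and $\pi\in\mathit{INC}$ the $i$-th segment of $\sigma$ is $\sigma(\pi(i)),\dots,\sigma(\pi(i+1)-1)$. $\mathit{match}(B,\sigma,\delta)$ holds iff there exist $\pi,\xi\in\mathit{INC}$ such that for every $i$ and every state $x$ in the $i$-th segment of $\sigma$ w.r.t. $\pi$, $xB\delta(\xi(i))$. $B$ is a skipping simulation (SKS) iff for all $s,w$ with $sBw$: $L(s)=L(w)$, and for every fullpath $\sigma$ starting at $s$ there is a fullpath $\delta$ starting at $w$ with $\mathit{match}(B,\sigma,\delta)$. The computation tree $\mathit{ctree}(\mathcal{M},s)$ has as nodes finite sequences over $S$; it is the smallest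 tree such that $\langle s\rangle$ is the root, and if $\langle s,\dots,x\rangle$ is a node and $x\to y$ then $\langle s,\dots,x,y\rangle$ is a node whose parent is $\langle s,\dots,x\rangle$. For the SKS $B$: if not $sBw$, $\mathit{ranktCt}(\mathcal{M},s,w)$ is the empty tree; otherwise it is the largest subtree of $\mathit{ctree}(\mathcal{M},s)$ (containing the root) such that every non-root node $\langle s,\dots,x\rangle$ satisfies $xBw$ and, for all $v$ with $w\to^{+}v$, not $xBv$. (Every branch of this tree is finite.) For a tree $t$ all of whose branches are finite, ordinals are assigned to nodes by $\mathit{size}(t,x)=\bigcup_{c\text{ a child of }x}\mathit{size}(t,c)+1$ (von Neumann ordinals), and $\mathit{size}(\mathit{ranktCt}(\mathcal{M},s,w))=\mathit{size}(\mathit{ranktCt}(\mathcal{M},s,w),\langle s\rangle)$. $\prec$ is the strict order on ordinals. *)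

theory Defs
  imports Main
begin

text \<open>A labeled transition system: states are the elements of the type 'a,
  the transition relation is R, the labeling is L. Left-totality is a
  separate assumption.\<close>

definition lts_left_total :: "('a \<Rightarrow> 'a \<Rightarrow> bool) \<Rightarrow> bool" where
  "lts_left_total R \<longleftrightarrow> (\<forall>x. \<exists>y. R x y)"

definition fullpath :: "('a \<Rightarrow> 'a \<Rightarrow> bool) \<Rightarrow> (nat \<Rightarrow> 'a) \<Rightarrow> bool" where
  "fullpath R \<sigma> \<longleftrightarrow> (\<forall>i. R (\<sigma> i) (\<sigma> (Suc i)))"

definition INC :: "(nat \<Rightarrow> nat) set" where
  "INC = {\<pi>. strict_mono \<pi> \<and> \<pi> 0 = 0}"

definition match :: "('a \<Rightarrow> 'a \<Rightarrow> bool) \<Rightarrow> (nat \<Rightarrow> 'a) \<Rightarrow> (nat \<Rightarrow> 'a) \<Rightarrow> bool" where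
  "match B \<sigma> \<delta> \<longleftrightarrow> (\<exists>\<pi>\<in>INC. \<exists>\<xi>\<in>INC. \<forall>i k. \<pi> i \<le> k \<and> k < \<pi> (Suc i) \<longrightarrow> B (\<sigma> k) (\<delta> (\<xi> i)))"

definition SKS :: "('a \<Rightarrow> 'a \<Rightarrow> bool) \<Rightarrow> ('a \<Rightarrow> 'l) \<Rightarrow> ('a \<Rightarrow> 'a \<Rightarrow> bool) \<Rightarrow> bool" where
  "SKS R L B \<longleftrightarrow> (\<forall>s w. B s w \<longrightarrow> L s = L w \<and>
      (\<forall>\<sigma>. fullpath R \<sigma> \<and> \<sigma> 0 = s \<longrightarrow> (\<exists>\<delta>. fullpath R \<delta> \<and> \<delta> 0 = w \<and> match B \<sigma> \<delta>)))"

inductive_set ctree :: "('a \<Rightarrow> 'a \<Rightarrow> bool) \<Rightarrow> 'a \<Rightarrow> 'a list set" for R s where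
  root: "[s] \<in> ctree R s"
| step: "p \<in> ctree R s \<Longrightarrow> R (last p) y \<Longrightarrow> p @ [y] \<in> ctree R s"

definition is_subtree :: "'a list set \<Rightarrow> 'a list set \<Rightarrow> 'a list \<Rightarrow> bool" where
  "is_subtree T t r \<longleftrightarrow> T \<subseteq> t \<and> r \<in> T \<and> (\<forall>x\<in>T. x \<noteq> r \<longrightarrow> butlast x \<in> T)"

definition ranktCt :: "('a \<Rightarrow> 'a \<Rightarrow> bool) \<Rightarrow> ('a \<Rightarrow> 'a \<Rightarrow> bool) \<Rightarrow> 'a \<Rightarrow> 'a \<Rightarrow> 'a list set" where
  "ranktCt R B s w = (if \<not> B s w then {} else
     \<Union>{T. is_subtree T (ctree R s) [s] \<and>
          (\<forall>x\<in>T. x \<noteq> [s] \<longrightarrow> B (last x) w \<and> (\<forall>v. R\<^sup>+\<^sup>+ w v \<longrightarrow> \<not> B (last x) v))})"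

definition child :: "'a list set \<Rightarrow> 'a list \<Rightarrow> 'a list \<Rightarrow> bool" where
  "child t x c \<longleftrightarrow> x \<in> t \<and> c \<in> t \<and> (\<exists>z. c = x @ [z])"

text \<open>Comparison of the ordinals size(t,x) = (UN c child of x. size(t,c)) + 1 for
  trees all of whose branches are finite, unfolded from the recursive definition:
  size(t,x) \<le> size(t',y) iff every child d of x has size(t,d) < size(t',y);
  size(t,x) < size(t',y) iff some child c of y has size(t,x) \<le> size(t',c).
  Least fixpoint; on trees with only finite branches this is exactly the
  ordinal order on von Neumann ranks.\<close>
inductive size_le :: "'a list set \<Rightarrow> 'a list \<Rightarrow> 'a list set \<Rightarrow> 'a list \<Rightarrow> bool"
  and size_less :: "'a list set \<Rightarrow> 'a list \<Rightarrow> 'a list set \<Rightarrow> 'a list \<Rightarrow> bool" where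
  le: "(\<And>d. child t x d \<Longrightarrow> size_less t d t' y) \<Longrightarrow> size_le t x t' y"
| less: "child t' y c \<Longrightarrow> size_le t x t' c \<Longrightarrow> size_less t x t' y"

definition rank_size_less :: "('a \<Rightarrow> 'a \<Rightarrow> bool) \<Rightarrow> ('a \<Rightarrow> 'a \<Rightarrow> bool) \<Rightarrow> 'a \<Rightarrow> 'a \<Rightarrow> 'a \<Rightarrow> 'a \<Rightarrow> bool" where
  "rank_size_less R B u w s w' \<longleftrightarrow> size_less (ranktCt R B u w) [u] (ranktCt R B s w') [s]"

end

theory Submission
  imports Defs
begin

text \<open>Prepending s embeds ranktCt(u,w) into the subtree of ranktCt(s,w) below the node
  [s,u], so size(ranktCt(u,w)) is at most the size of that node, which is smaller than the
  size of the root [s]. The comparison needs every branch of ranktCt(u,w) to be finite: along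
  an infinite branch the skipping simulation would match the states to a fullpath from w, so
  some state of the branch would be related to a state strictly reachable from w, which the
  nodes of ranktCt(u,w) forbid.\<close>

definition rank_subtree :: "('a \<Rightarrow> 'a \<Rightarrow> bool) \<Rightarrow> ('a \<Rightarrow> 'a \<Rightarrow> bool) \<Rightarrow> 'a \<Rightarrow> 'a \<Rightarrow> 'a list set \<Rightarrow> bool"
  where "rank_subtree R B s w T \<longleftrightarrow> is_subtree T (ctree R s) [s] \<and>
    (\<forall>x\<in>T. x \<noteq> [s] \<longrightarrow> B (last x) w \<and> (\<forall>v. R\<^sup>+\<^sup>+ w v \<longrightarrow> \<not> B (last x) v))"

lemma ranktCt_eq_Union: "B s w \<Longrightarrow> ranktCt R B s w = \<Union>{T. rank_subtree R B s w T}"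
  unfolding ranktCt_def rank_subtree_def by simp

lemma rank_subtree_subset_ranktCt: "rank_subtree R B s w T \<Longrightarrow> B s w \<Longrightarrow> T \<subseteq> ranktCt R B s w"
  by (auto simp: ranktCt_eq_Union)

lemma rank_subtree_root: "rank_subtree R B s w {[s]}"
  unfolding rank_subtree_def is_subtree_def by (simp add: ctree.root)

lemma rank_subtree_ranktCt:
  assumes "B s w"
  shows "rank_subtree R B s w (ranktCt R B s w)"
proof -
  have mem: "x \<in> ranktCt R B s w \<longleftrightarrow> (\<exists>T. rank_subtree R B s w T \<and> x \<in> T)" for x
    unfolding ranktCt_eq_Union[of B s w R, OF assms] by blast
  have "[s] \<in> ranktCt R B s w"
    using mem[of "[s]"] rank_subtree_root[of R B s w] by blast
  moreover have "butlast x \<in> ranktCt R B s w \<and> B (last x) w \<and> (\<forall>v. R\<^sup>+\<^sup>+ w v \<longrightarrow> \<not> B (last x) v)"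
    if x: "x \<in> ranktCt R B s w" "x \<noteq> [s]" for x
  proof -
    obtain T where "rank_subtree R B s w T" "x \<in> T"
      using x(1) mem[of x] by blast
    then show ?thesis
      using mem[of "butlast x"] x(2) unfolding rank_subtree_def is_subtree_def by blast
  qed
  moreover have "ranktCt R B s w \<subseteq> ctree R s"
    using mem unfolding rank_subtree_def is_subtree_def by blast
  ultimately show ?thesis
    unfolding rank_subtree_def is_subtree_def by blast
qed

lemma ranktCt_related: "x \<in> ranktCt R B s w \<Longrightarrow> B s w"
  unfolding ranktCt_def by (auto split: if_splits)

lemma root_in_ranktCt: "B s w \<Longrightarrow> [s] \<in> ranktCt R B s w"
  using rank_subtree_ranktCt[of B s w R] unfolding rank_subtree_def is_subtree_def by blast

lemma ranktCt_subset_ctree: "ranktCt R B s w \<subseteq> ctree R s"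
  using rank_subtree_ranktCt[of B s w R] ranktCt_related[of _ R B s w]
  unfolding rank_subtree_def is_subtree_def by blast

lemma ranktCt_butlast: "x \<in> ranktCt R B s w \<Longrightarrow> x \<noteq> [s] \<Longrightarrow> butlast x \<in> ranktCt R B s w"
  using rank_subtree_ranktCt[of B s w R] ranktCt_related[of x R B s w]
  unfolding rank_subtree_def is_subtree_def by blast

lemma ranktCt_last:
  assumes "x \<in> ranktCt R B s w" "x \<noteq> [s]"
  shows "B (last x) w" and "R\<^sup>+\<^sup>+ w v \<Longrightarrow> \<not> B (last x) v"
  using rank_subtree_ranktCt[of B s w R] ranktCt_related[OF assms(1)] assms
  unfolding rank_subtree_def by blast+

lemma ctree_nonempty: "p \<in> ctree R s \<Longrightarrow> p \<noteq> []"
  by (induction rule: ctree.induct) auto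

lemma ctree_snocD: "p @ [y] \<in> ctree R s \<Longrightarrow> p \<noteq> [] \<Longrightarrow> R (last p) y"
  by (erule ctree.cases) auto

lemma ctree_Cons: "p \<in> ctree R u \<Longrightarrow> R s u \<Longrightarrow> s # p \<in> ctree R s"
proof (induction rule: ctree.induct)
  case root
  then show ?case using ctree.step[OF ctree.root, of R s u] by simp
next
  case (step p y)
  then show ?case using ctree.step[of "s # p" R s y] ctree_nonempty[OF step.hyps(1)] by simp
qed

lemma fullpath_tranclp: "fullpath R \<delta> \<Longrightarrow> 0 < n \<Longrightarrow> R\<^sup>+\<^sup>+ (\<delta> 0) (\<delta> n)"
proof (induction n)
  case (Suc n)
  then have "R (\<delta> n) (\<delta> (Suc n))" unfolding fullpath_def by blast
  with Suc show ?case by (cases "n = 0") auto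
qed simp

lemma match_relates_to_successor:
  assumes "fullpath R \<delta>" "match B \<sigma> \<delta>"
  shows "\<exists>k v. B (\<sigma> k) v \<and> R\<^sup>+\<^sup>+ (\<delta> 0) v"
proof -
  obtain \<pi> \<xi> where "\<pi> \<in> INC" "\<xi> \<in> INC"
    and matched: "\<And>i k. \<pi> i \<le> k \<Longrightarrow> k < \<pi> (Suc i) \<Longrightarrow> B (\<sigma> k) (\<delta> (\<xi> i))"
    using assms(2) unfolding match_def by blast
  then have "\<pi> 1 < \<pi> (Suc 1)" and "0 < \<xi> 1"
    unfolding INC_def by (auto dest: strict_monoD)
  then have "B (\<sigma> (\<pi> 1)) (\<delta> (\<xi> 1))" and "R\<^sup>+\<^sup>+ (\<delta> 0) (\<delta> (\<xi> 1))"
    using matched fullpath_tranclp[OF assms(1)] by simp_all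
  then show ?thesis by blast
qed

lemma wf_child_ranktCt:
  assumes sks: "SKS R L B"
  shows "wf {(c, x). child (ranktCt R B u w) x c}"
proof -
  let ?T = "ranktCt R B u w"
  have False if chain: "\<And>i. child ?T (f i) (f (Suc i))" for f
  proof -
    have in_T: "f i \<in> ?T" and grows: "\<exists>z. f (Suc i) = f i @ [z]" for i
      using chain unfolding child_def by blast+
    have in_ctree: "f i \<in> ctree R u" for i
      using in_T ranktCt_subset_ctree[of R B u w] by blast
    have "Suc i \<le> length (f i)" for i
    proof (induction i)
      case 0
      show ?case using ctree_nonempty[OF in_ctree] by (simp add: Suc_leI)
    next
      case (Suc i)
      then show ?case using grows[of i] by auto
    qed
    then have not_root: "f (Suc i) \<noteq> [u]" for i
      by (metis Suc_le_length_iff list.inject neq_Nil_conv)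
    define \<sigma> where "\<sigma> i = last (f (Suc i))" for i
    have "fullpath R \<sigma>"
      unfolding fullpath_def
    proof
      fix i
      obtain z where z: "f (Suc (Suc i)) = f (Suc i) @ [z]" using grows by blast
      then show "R (\<sigma> i) (\<sigma> (Suc i))"
        using ctree_snocD[of "f (Suc i)" z R u] in_ctree[of "Suc (Suc i)"]
          ctree_nonempty[OF in_ctree[of "Suc i"]] unfolding \<sigma>_def by simp
    qed
    moreover have "B (\<sigma> 0) w"
      unfolding \<sigma>_def using ranktCt_last(1)[OF in_T not_root] .
    ultimately obtain \<delta> where "fullpath R \<delta>" "\<delta> 0 = w" "match B \<sigma> \<delta>"
      using sks unfolding SKS_def by blast
    then obtain k v where "B (\<sigma> k) v" "R\<^sup>+\<^sup>+ w v"
      using match_relates_to_successor by metis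
    then show False
      using ranktCt_last(2)[OF in_T not_root] unfolding \<sigma>_def by blast
  qed
  then show ?thesis unfolding wf_iff_no_infinite_down_chain by blast
qed

lemma size_le_child_embedding:
  assumes "wf {(c, x). child t x c}"
    and "\<And>x c. child t x c \<Longrightarrow> child t' (f x) (f c)"
  shows "size_le t x t' (f x)"
  using assms(1)
proof (induction x rule: wf_induct_rule)
  case (less x)
  show ?case
  proof (rule size_le_size_less.le)
    fix c
    assume "child t x c"
    then show "size_less t c t' (f x)"
      using less assms(2) by (blast intro: size_le_size_less.less)
  qed
qed

lemma Cons_in_ranktCt:
  assumes "R s u" "[s, u] \<in> ranktCt R B s w" "p \<in> ranktCt R B u w"
  shows "s # p \<in> ranktCt R B s w"
proof -
  let ?Tu = "ranktCt R B u w"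
  let ?T = "insert [s] (Cons s ` ?Tu)"
  have "B u w" and u_unrelated: "\<And>v. R\<^sup>+\<^sup>+ w v \<Longrightarrow> \<not> B u v"
    using ranktCt_last[OF assms(2)] by simp_all
  have "s # q \<in> ctree R s" if "q \<in> ?Tu" for q
    using ctree_Cons[of q R u s] that assms(1) ranktCt_subset_ctree[of R B u w] by blast
  then have "?T \<subseteq> ctree R s"
    by (simp add: ctree.root image_subset_iff)
  moreover have "butlast x \<in> ?T \<and> B (last x) w \<and> (\<forall>v. R\<^sup>+\<^sup>+ w v \<longrightarrow> \<not> B (last x) v)"
    if x: "x \<in> ?T" "x \<noteq> [s]" for x
  proof -
    obtain q where q: "q \<in> ?Tu" "x = s # q"
      using x by blast
    have "q \<noteq> []"
      using q(1) ranktCt_subset_ctree[of R B u w] ctree_nonempty[of q R u] by blast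
    show ?thesis
    proof (cases "q = [u]")
      case True
      then show ?thesis using q(2) \<open>B u w\<close> u_unrelated by simp
    next
      case False
      then have "butlast q \<in> ?Tu" and "B (last q) w \<and> (\<forall>v. R\<^sup>+\<^sup>+ w v \<longrightarrow> \<not> B (last q) v)"
        using ranktCt_butlast[OF q(1)] ranktCt_last[OF q(1)] by simp_all
      then show ?thesis using q(2) \<open>q \<noteq> []\<close> by simp
    qed
  qed
  ultimately have "rank_subtree R B s w ?T"
    unfolding rank_subtree_def is_subtree_def by simp
  then show ?thesis
    using rank_subtree_subset_ranktCt[of R B s w] ranktCt_related[OF assms(2)] assms(3) by blast
qed

theorem lemma3:
  fixes R :: "'a \<Rightarrow> 'a \<Rightarrow> bool" and L :: "'a \<Rightarrow> 'l" and B :: "'a \<Rightarrow> 'a \<Rightarrow> bool"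
  assumes "lts_left_total R"
    and "SKS R L B"
    and "B s w" and "R s u"
    and "[s, u] \<in> ranktCt R B s w"
  shows "rank_size_less R B u w s w"
proof -
  let ?Ts = "ranktCt R B s w" and ?Tu = "ranktCt R B u w"
  have "child ?Ts (s # p) (s # c)" if "child ?Tu p c" for p c
    using that Cons_in_ranktCt[OF assms(4,5)] unfolding child_def by auto
  then have "size_le ?Tu [u] ?Ts [s, u]"
    using size_le_child_embedding[OF wf_child_ranktCt[OF assms(2)], where t' = ?Ts and f = "Cons s"]
    by simp
  moreover have "child ?Ts [s] [s, u]"
    using assms(5) root_in_ranktCt[of B s w R, OF assms(3)] unfolding child_def by simp
  ultimately show ?thesis
    unfolding rank_size_less_def by (blast intro: size_le_size_less.less)
qed

end
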